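(* There exist a set $\Omega$ with exactly three elements, a distribution $m\in\Delta(\Omega)$ and $\lambda\in[0,1)$ defining an irreducible Markov chain with transitions $\pi(\omega\mid\omega)=(1-\lambda)m(\omega)+\lambda$ and $\pi(\omega'\mid\omega)=(1-\lambda)m(\omega')$ for $\omega'\neq\omega$, a payoff function $r:\Omega\to\mathbb{R}$, a discount factor $\delta\in(0,1)$ and an initial belief $p_1\in\Delta(\Omega)$ such that the greedy strategy $\sigma_*$ is not optimal at $p_1$ in the decision problem described in the context.
   Context: Identify each $\omega\in\Omega$ with a unit vector of $\mathbb{R}^\Omega$ and $\Delta(\Omega)$ with the unit simplex. For $p\in\Delta(\Omega)$ let $\langle p,r\rangle=\sum_\omega p(\omega)r(\omega)$; $I=\{p:\langle p,r\rangle\ge0\}$, $J=\Delta(\Omega)\setminus I$. Let $M$ be the transition matrix and $\phi(q)=qM$ (for the chain above, $\phi(p)=m+\lambda(p-m)$). $\mathcal{S}(p)$ is the set of Borel probability measures on $\Delta(\Omega)$ with mean $p$, $\mu_p$ the Dirac mass at $p$. Decision problem from $p_1$: at each stage $n$, at belief $p_n$, the advisor chooses $\mu\in\mathcal{S}(p_n)$ (possibly depending on the past), a posterior $q_n\sim\mu$ is drawn, the stage payoff is $\mathbf{1}_{\{q_n\in I\}}$, and $p_{n+1}=\phi(q_n)$. A strategy's payoff is $\mathbb{E}[(1-\delta)\sum_{n\ge1}\delta^{n-1}\mathbf{1}_{\{q_n\in I\}}]$; $V_\delta(p_1)$ is the maximal payoff; a strategy is optimal at $p_1$ if it achieves it.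 The greedy strategy $\sigma_*$: at $p\in I$ choose $\mu_p$; at $p\in J$ choose a two-point splitting $p=a_Iq_I+a_Jq_J$ maximizing $a_I$ subject to $q_I\in I$, $q_J\in\Delta(\Omega)$, $a_I+a_J=1$, $a_I,a_J\ge0$. *)

theory Defs
  imports "HOL-Probability.Probability"
begin

text \<open>States: the index type 'n (finite); beliefs are vectors in real^'n.
  Each state omega is identified with the unit vector axis omega 1.\<close>

definition prob_simplex :: "(real^'n::finite) set" where
  "prob_simplex = {p. (\<forall>i. 0 \<le> p $ i) \<and> (\<Sum>i\<in>UNIV. p $ i) = 1}"

definition trans_prob :: "real^'n::finite \<Rightarrow> real \<Rightarrow> 'n \<Rightarrow> 'n \<Rightarrow> real" where
  "trans_prob m l w w' = (1 - l) * m $ w' + (if w' = w then l else 0)"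

definition irreducible_chain :: "('n::finite \<Rightarrow> 'n \<Rightarrow> real) \<Rightarrow> bool" where
  "irreducible_chain P \<longleftrightarrow> (\<forall>w w'. (\<lambda>a b. 0 < P a b)\<^sup>*\<^sup>* w w')"

definition phi :: "real^'n::finite \<Rightarrow> real \<Rightarrow> real^'n \<Rightarrow> real^'n" where
  "phi m l q = (\<chi> w'. \<Sum>w\<in>UNIV. q $ w * trans_prob m l w w')"

definition pair :: "real^'n::finite \<Rightarrow> real^'n \<Rightarrow> real" where
  "pair p r = (\<Sum>w\<in>UNIV. p $ w * r $ w)"

definition Iset :: "real^'n::finite \<Rightarrow> (real^'n) set" where
  "Iset r = {p \<in> prob_simplex. 0 \<le> pair p r}"

definition Jset :: "real^'n::finite \<Rightarrow> (real^'n) set" where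
  "Jset r = prob_simplex - Iset r"

text \<open>S(p): Borel probability measures on the prob_simplex with mean p (represented as Borel
  probability measures on real^'n concentrated on the prob_simplex).\<close>
definition splittings :: "real^'n::finite \<Rightarrow> (real^'n) measure set" where
  "splittings p = {\<mu>. sets \<mu> = sets borel \<and> prob_space \<mu> \<and> (AE q in \<mu>. q \<in> prob_simplex)
      \<and> integrable \<mu> (\<lambda>q. q) \<and> integral\<^sup>L \<mu> (\<lambda>q. q) = p}"

text \<open>A strategy maps the history of past posteriors [q_1,...,q_(n-1)] to the measure chosen at
  stage n. The current belief after a history is p_1 (empty history) or phi(q_(n-1)).\<close>
definition belief :: "real^'n::finite \<Rightarrow> real \<Rightarrow> real^'n \<Rightarrow> (real^'n) list \<Rightarrow> real^'n" where
  "belief m l p1 h = (if h = [] then p1 else phi m l (last h))"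

definition is_strategy ::
  "real^'n::finite \<Rightarrow> real \<Rightarrow> real^'n \<Rightarrow> ((real^'n) list \<Rightarrow> (real^'n) measure) \<Rightarrow> bool" where
  "is_strategy m l p1 \<sigma> \<longleftrightarrow> (\<forall>h. set h \<subseteq> prob_simplex \<longrightarrow> \<sigma> h \<in> splittings (belief m l p1 h))"

text \<open>Expected discounted payoff of the first N stages, from history h onwards
  (normalised as in the payoff (1-delta) sum delta^(n-1) 1_{q_n in I}).\<close>
fun trunc_payoff ::
  "real^'n::finite \<Rightarrow> real \<Rightarrow> nat \<Rightarrow> ((real^'n) list \<Rightarrow> (real^'n) measure) \<Rightarrow> (real^'n) list \<Rightarrow> ennreal" where
  "trunc_payoff r d 0 \<sigma> h = 0"
| "trunc_payoff r d (Suc N) \<sigma> h =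
     (\<integral>\<^sup>+ q. ennreal (1 - d) * indicator (Iset r) q + ennreal d * trunc_payoff r d N \<sigma> (h @ [q]) \<partial>(\<sigma> h))"

text \<open>Payoff of a strategy: the expectation of the infinite discounted sum, i.e. the limit
  (supremum) of the expected truncated sums (monotone convergence).\<close>
definition strat_payoff ::
  "real^'n::finite \<Rightarrow> real \<Rightarrow> ((real^'n) list \<Rightarrow> (real^'n) measure) \<Rightarrow> ennreal" where
  "strat_payoff r d \<sigma> = (SUP N. trunc_payoff r d N \<sigma> [])"

definition value_fn :: "real^'n::finite \<Rightarrow> real \<Rightarrow> real^'n \<Rightarrow> real \<Rightarrow> real^'n \<Rightarrow> ennreal" where
  "value_fn m l r d p1 = (SUP \<sigma> \<in> {\<sigma>. is_strategy m l p1 \<sigma>}. strat_payoff r d \<sigma>)"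

definition optimal ::
  "real^'n::finite \<Rightarrow> real \<Rightarrow> real^'n \<Rightarrow> real \<Rightarrow> real^'n \<Rightarrow> ((real^'n) list \<Rightarrow> (real^'n) measure) \<Rightarrow> bool" where
  "optimal m l r d p1 \<sigma> \<longleftrightarrow> is_strategy m l p1 \<sigma> \<and> strat_payoff r d \<sigma> = value_fn m l r d p1"

definition feasible_split :: "real^'n::finite \<Rightarrow> real^'n \<Rightarrow> real \<Rightarrow> real^'n \<Rightarrow> real \<Rightarrow> real^'n \<Rightarrow> bool" where
  "feasible_split r p aI qI aJ qJ \<longleftrightarrow> p = aI *\<^sub>R qI + aJ *\<^sub>R qJ \<and> qI \<in> Iset r \<and> qJ \<in> prob_simplex
      \<and> aI + aJ = 1 \<and> 0 \<le> aI \<and> 0 \<le> aJ"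

definition greedy_choice :: "real^'n::finite \<Rightarrow> real^'n \<Rightarrow> (real^'n) measure \<Rightarrow> bool" where
  "greedy_choice r p \<mu> \<longleftrightarrow>
     (p \<in> Iset r \<longrightarrow> \<mu> = return borel p) \<and>
     (p \<in> Jset r \<longrightarrow> (\<exists>aI qI aJ qJ. feasible_split r p aI qI aJ qJ
        \<and> (\<forall>aI' qI' aJ' qJ'. feasible_split r p aI' qI' aJ' qJ' \<longrightarrow> aI' \<le> aI)
        \<and> sets \<mu> = sets borel
        \<and> (\<forall>A\<in>sets borel. emeasure \<mu> A = ennreal aI * indicator A qI + ennreal aJ * indicator A qJ)))"

definition is_greedy ::
  "real^'n::finite \<Rightarrow> real \<Rightarrow> real^'n \<Rightarrow> real^'n \<Rightarrow> ((real^'n) list \<Rightarrow> (real^'n) measure) \<Rightarrow> bool" where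
  "is_greedy m l r p1 \<sigma> \<longleftrightarrow> (\<forall>h. set h \<subseteq> prob_simplex \<longrightarrow> greedy_choice r (belief m l p1 h) (\<sigma> h))"

end

theory Submission
  imports Defs
begin

text \<open>State 1 pays 1, state 2 is almost neutral (\<open>-1/1000\<close>) and state 3 is very bad
  (\<open>-1000\<close>), so a posterior in \<open>I\<close> can carry up to 1000 units of state 2 but only
  \<open>1/1000\<close> unit of state 3 per unit of state 1. At \<open>p\<^sub>1 = (1/10, 0, 9/10)\<close> the greedy split
  spends all the mass of state 1 on state 3 and sends the rest to the bad state \<open>\<omega>\<^sub>3\<close>. Since
  \<open>m\<close> puts almost no mass on state 1, \<open>\<phi>(\<omega>\<^sub>3)\<close> is a belief in \<open>J\<close> from which no later split
  earns much. Holding back a little mass of state 1 in the bad posterior instead lets it be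
  combined, one stage later, with the mass of state 2 created by the transition; the resulting
  second-stage payoff outweighs the small loss at the first stage.\<close>

section \<open>Two-point measures\<close>

definition two_point :: "real \<Rightarrow> 'a \<Rightarrow> 'a \<Rightarrow> 'a::topological_space measure" where
  "two_point a x y = distr (measure_pmf (bernoulli_pmf a)) borel (\<lambda>b. if b then x else y)"

lemma sets_two_point [simp, measurable_cong]: "sets (two_point a x y) = sets borel"
  by (simp add: two_point_def)

lemma prob_space_two_point: "prob_space (two_point a x y)"
  unfolding two_point_def by (rule prob_space.prob_space_distr) (auto simp: prob_space_measure_pmf)

lemma AE_two_point:
  fixes x y :: "'a::t1_space"
  shows "AE q in two_point a x y. q = x \<or> q = y"
proof -
  have "{q. q \<in> {x, y}} \<in> sets borel"
    by (simp add: borel_closed finite_imp_closed)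
  then have "AE q in two_point a x y. q \<in> {x, y}"
    unfolding two_point_def by (subst AE_distr_iff) simp_all
  then show ?thesis by simp
qed

lemma emeasure_two_point:
  assumes "0 \<le> a" "a \<le> 1" "A \<in> sets borel"
  shows "emeasure (two_point a x y) A = ennreal a * indicator A x + ennreal (1 - a) * indicator A y"
proof -
  have "(\<lambda>b. if b then x else y) -` A = (if x \<in> A then {True} else {}) \<union> (if y \<in> A then {False} else {})"
    by (auto split: if_splits)
  then show ?thesis
    using assms unfolding two_point_def
    by (subst emeasure_distr) (auto simp: emeasure_measure_pmf_finite indicator_def ennreal_plus)
qed

lemma nn_integral_two_point:
  fixes x y :: "'a::t1_space"
  assumes "0 \<le> a" "a \<le> 1"
  shows "(\<integral>\<^sup>+ q. g q \<partial>two_point a x y) = ennreal a * g x + ennreal (1 - a) * g y"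
  \<comment> \<open>\<open>g\<close> need not be measurable, so the integral is computed on the two atoms, not via \<open>distr\<close>.\<close>
proof (cases "x = y")
  case True
  have "(\<integral>\<^sup>+ q. g q \<partial>two_point a x y) = (\<integral>\<^sup>+ q. g x * indicator {x} q \<partial>two_point a x y)"
    using AE_two_point[of x y a] True by (intro nn_integral_cong_AE) (auto elim!: eventually_mono)
  also have "\<dots> = (ennreal a + ennreal (1 - a)) * g x"
    using assms True by (simp add: nn_integral_cmult_indicator emeasure_two_point mult.commute
        flip: ennreal_plus)
  also have "\<dots> = ennreal a * g x + ennreal (1 - a) * g y"
    using True by (simp add: distrib_right)
  finally show ?thesis .
next
  case False
  have "(\<integral>\<^sup>+ q. g q \<partial>two_point a x y)
      = (\<integral>\<^sup>+ q. g x * indicator {x} q + g y * indicator {y} q \<partial>two_point a x y)"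
    using AE_two_point[of x y a] False by (intro nn_integral_cong_AE) (auto elim!: eventually_mono)
  also have "\<dots> = ennreal a * g x + ennreal (1 - a) * g y"
    using assms False by (simp add: nn_integral_add nn_integral_cmult_indicator emeasure_two_point algebra_simps)
  finally show ?thesis .
qed

lemma two_point_eqI:
  assumes "sets \<mu> = sets borel" "0 \<le> a" "a \<le> 1"
    and "\<forall>A\<in>sets borel. emeasure \<mu> A = ennreal a * indicator A x + ennreal (1 - a) * indicator A y"
  shows "\<mu> = two_point a x y"
  by (rule measure_eqI) (simp_all add: assms emeasure_two_point)

lemma return_eq_two_point: "return borel p = two_point 1 p p"
  by (rule measure_eqI) (simp_all add: emeasure_two_point)

lemma integral_two_point:
  fixes x y :: "'a::euclidean_space"
  assumes "0 \<le> a" "a \<le> 1"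
  shows "integrable (two_point a x y) (\<lambda>q. q)"
    and "integral\<^sup>L (two_point a x y) (\<lambda>q. q) = a *\<^sub>R x + (1 - a) *\<^sub>R y"
proof -
  show "integrable (two_point a x y) (\<lambda>q. q)"
    unfolding two_point_def by (subst integrable_distr_eq) (auto intro!: integrable_measure_pmf_finite)
  have "integral\<^sup>L (two_point a x y) (\<lambda>q. q)
      = (\<Sum>b\<in>UNIV. pmf (bernoulli_pmf a) b *\<^sub>R (if b then x else y))"
    unfolding two_point_def by (subst integral_distr) (auto intro: integral_measure_pmf)
  then show "integral\<^sup>L (two_point a x y) (\<lambda>q. q) = a *\<^sub>R x + (1 - a) *\<^sub>R y"
    using assms by (simp add: UNIV_bool)
qed

lemma two_point_in_splittings:
  assumes "0 \<le> a" "a \<le> 1" "x \<in> prob_simplex" "y \<in> prob_simplex" "a *\<^sub>R x + (1 - a) *\<^sub>R y = p"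
  shows "two_point a x y \<in> splittings p"
proof -
  have "AE q in two_point a x y. q \<in> prob_simplex"
    using AE_two_point[of x y a] by eventually_elim (use assms in auto)
  then show ?thesis
    by (simp add: splittings_def prob_space_two_point integral_two_point assms)
qed

section \<open>Greedy choices and payoffs\<close>

lemma phi_nth: "phi m l q $ i = (1 - l) * m $ i * (\<Sum>j\<in>UNIV. q $ j) + l * q $ i"
proof -
  have "phi m l q $ i = (\<Sum>j\<in>UNIV. q $ j * ((1 - l) * m $ i)) + (\<Sum>j\<in>UNIV. if i = j then q $ j * l else 0)"
    by (simp add: phi_def trans_prob_def distrib_left sum.distrib if_distrib[where f="\<lambda>x. _ * x"] cong: if_cong)
  also have "(\<Sum>j\<in>UNIV. if i = j then q $ j * l else 0) = l * q $ i"
    by simp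
  finally show ?thesis
    by (simp add: sum_distrib_left mult_ac)
qed

lemma phi_nth_prob_simplex:
  assumes "q \<in> prob_simplex"
  shows "phi m l q $ i = (1 - l) * m $ i + l * q $ i"
  using assms by (simp add: phi_nth prob_simplex_def)

lemma phi_in_prob_simplex:
  assumes "m \<in> prob_simplex" "0 \<le> l" "l \<le> 1" "q \<in> prob_simplex"
  shows "phi m l q \<in> prob_simplex"
  using assms by (simp add: phi_nth_prob_simplex prob_simplex_def sum.distrib flip: sum_distrib_left)

lemma belief_in_prob_simplex:
  assumes "m \<in> prob_simplex" "0 \<le> l" "l \<le> 1" "p1 \<in> prob_simplex" "set h \<subseteq> prob_simplex"
  shows "belief m l p1 h \<in> prob_simplex"
  using assms by (auto simp: belief_def intro!: phi_in_prob_simplex)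

lemma pair_combination: "pair (a *\<^sub>R x + b *\<^sub>R y) r = a * pair x r + b * pair y r"
  by (simp add: pair_def algebra_simps sum.distrib sum_distrib_left)

lemma feasible_split_Jset:
  assumes "feasible_split r p aI qI aJ qJ" "p \<in> Jset r"
  shows "qJ \<in> Jset r"
proof (rule ccontr)
  assume "qJ \<notin> Jset r"
  then have "0 \<le> pair qJ r"
    using assms(1) by (simp add: feasible_split_def Jset_def Iset_def)
  then have "0 \<le> pair p r"
    using assms(1) by (simp add: feasible_split_def Iset_def pair_combination)
  then show False
    using assms(2) by (simp add: Jset_def Iset_def)
qed

lemma feasible_split_part:
  assumes "feasible_split r p aI qI aJ qJ"
  shows "0 \<le> aI * qI $ i" "aI * qI $ i \<le> p $ i" "(\<Sum>i\<in>UNIV. aI * qI $ i) = aI"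
    and "0 \<le> pair (aI *\<^sub>R qI) r"
proof -
  have "qI \<in> prob_simplex" "qJ \<in> prob_simplex" "0 \<le> pair qI r" "0 \<le> aI" "0 \<le> aJ"
    and "p = aI *\<^sub>R qI + aJ *\<^sub>R qJ"
    using assms by (auto simp: feasible_split_def Iset_def)
  then show "0 \<le> aI * qI $ i" "aI * qI $ i \<le> p $ i" "(\<Sum>i\<in>UNIV. aI * qI $ i) = aI"
      "0 \<le> pair (aI *\<^sub>R qI) r"
    by (auto simp: prob_simplex_def pair_def mult.assoc simp flip: sum_distrib_left)
qed

lemma feasible_split_of_part:
  fixes x p :: "real^'n::finite"
  assumes "p \<in> prob_simplex" "\<And>i. 0 \<le> x $ i" "\<And>i. x $ i \<le> p $ i" "0 \<le> pair x r"
    and "(\<Sum>i\<in>UNIV. x $ i) < 1" and "e \<in> Iset r"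
  shows "\<exists>qI qJ. feasible_split r p (\<Sum>i\<in>UNIV. x $ i) qI (1 - (\<Sum>i\<in>UNIV. x $ i)) qJ"
proof -
  define a where "a = (\<Sum>i\<in>UNIV. x $ i)"
  have a: "0 \<le> a" "a < 1"
    using assms(2,5) by (auto simp: a_def intro: sum_nonneg)
  have p: "\<And>i. 0 \<le> p $ i" "(\<Sum>i\<in>UNIV. p $ i) = 1"
    using assms(1) by (auto simp: prob_simplex_def)
  define qJ where "qJ = (1 / (1 - a)) *\<^sub>R (p - x)"
  have qJ: "qJ \<in> prob_simplex"
    using a assms(3) p(2) by (simp add: qJ_def prob_simplex_def sum_subtractf a_def flip: sum_divide_distrib)
  show ?thesis
  proof (cases "a = 0")
    case True
    then have "x = 0"
      using assms(2) by (simp add: a_def sum_nonneg_eq_0_iff vec_eq_iff)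
    then have "feasible_split r p a e (1 - a) p"
      using True assms(1,6) by (simp add: feasible_split_def)
    then show ?thesis
      unfolding a_def by blast
  next
    case False
    define qI where "qI = (1 / a) *\<^sub>R x"
    have "0 \<le> pair qI r"
      using a assms(4) by (simp add: qI_def pair_def flip: sum_divide_distrib)
    then have "qI \<in> Iset r"
      using False a assms(2) by (simp add: qI_def Iset_def prob_simplex_def a_def flip: sum_divide_distrib)
    moreover have "p = a *\<^sub>R qI + (1 - a) *\<^sub>R qJ"
      using False a by (simp add: qI_def qJ_def)
    ultimately have "feasible_split r p a qI (1 - a) qJ"
      using a qJ by (simp add: feasible_split_def)
    then show ?thesis
      unfolding a_def by blast
  qed
qed

lemma greedy_choice_JsetE:
  assumes "greedy_choice r p \<mu>" "p \<in> Jset r"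
  obtains aI qI qJ where "feasible_split r p aI qI (1 - aI) qJ"
    and "\<And>aI' qI' aJ' qJ'. feasible_split r p aI' qI' aJ' qJ' \<Longrightarrow> aI' \<le> aI"
    and "\<mu> = two_point aI qI qJ"
proof -
  obtain aI qI aJ qJ where split: "feasible_split r p aI qI aJ qJ"
    and max: "\<forall>aI' qI' aJ' qJ'. feasible_split r p aI' qI' aJ' qJ' \<longrightarrow> aI' \<le> aI"
    and emeasure: "sets \<mu> = sets borel"
      "\<forall>A\<in>sets borel. emeasure \<mu> A = ennreal aI * indicator A qI + ennreal aJ * indicator A qJ"
    using assms by (auto simp: greedy_choice_def)
  have aJ: "aJ = 1 - aI" and "0 \<le> aI" "aI \<le> 1"
    using split by (auto simp: feasible_split_def)
  show ?thesis
  proof (rule that)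
    show "feasible_split r p aI qI (1 - aI) qJ"
      using split aJ by simp
    show "aI' \<le> aI" if "feasible_split r p aI' qI' aJ' qJ'" for aI' qI' aJ' qJ'
      using max that by blast
    show "\<mu> = two_point aI qI qJ"
      by (rule two_point_eqI) (use emeasure aJ \<open>0 \<le> aI\<close> \<open>aI \<le> 1\<close> in auto)
  qed
qed

lemma greedy_choice_in_splittings:
  assumes "greedy_choice r p \<mu>" "p \<in> prob_simplex"
  shows "\<mu> \<in> splittings p"
proof (cases "p \<in> Iset r")
  case True
  then have "\<mu> = two_point 1 p p"
    using assms(1) by (simp add: greedy_choice_def return_eq_two_point)
  then show ?thesis
    using two_point_in_splittings[of 1 p p p] assms(2) by simp
next
  case False
  then have "p \<in> Jset r"
    using assms(2) by (simp add: Jset_def)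
  then obtain aI qI qJ where "feasible_split r p aI qI (1 - aI) qJ" "\<mu> = two_point aI qI qJ"
    using greedy_choice_JsetE[OF assms(1)] by metis
  then show ?thesis
    by (auto simp: feasible_split_def Iset_def intro!: two_point_in_splittings)
qed

lemma is_greedy_imp_is_strategy:
  assumes "is_greedy m l r p1 \<sigma>" "m \<in> prob_simplex" "0 \<le> l" "l \<le> 1" "p1 \<in> prob_simplex"
  shows "is_strategy m l p1 \<sigma>"
  using assms(1) unfolding is_strategy_def is_greedy_def
  by (auto intro!: greedy_choice_in_splittings belief_in_prob_simplex[OF assms(2-5)])

lemma greedy_choice_exists:
  assumes "p \<in> prob_simplex"
    and "p \<in> Jset r \<Longrightarrow> \<exists>aI qI aJ qJ. feasible_split r p aI qI aJ qJ
           \<and> (\<forall>aI' qI' aJ' qJ'. feasible_split r p aI' qI' aJ' qJ' \<longrightarrow> aI' \<le> aI)"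
  shows "\<exists>\<mu>. greedy_choice r p \<mu>"
proof (cases "p \<in> Iset r")
  case True
  then show ?thesis
    by (auto simp: greedy_choice_def Jset_def)
next
  case False
  then have J: "p \<in> Jset r"
    using assms(1) by (simp add: Jset_def)
  then obtain aI qI aJ qJ where split: "feasible_split r p aI qI aJ qJ"
    and "\<forall>aI' qI' aJ' qJ'. feasible_split r p aI' qI' aJ' qJ' \<longrightarrow> aI' \<le> aI"
    using assms(2) by blast
  moreover have "aJ = 1 - aI" "0 \<le> aI" "aI \<le> 1"
    using split by (auto simp: feasible_split_def)
  ultimately have "greedy_choice r p (two_point aI qI qJ)"
    using False J by (auto simp: greedy_choice_def emeasure_two_point)
  then show ?thesis ..
qed

lemma is_greedy_exists:
  assumes "m \<in> prob_simplex" "0 \<le> l" "l \<le> 1" "p1 \<in> prob_simplex"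
    and "\<And>p. p \<in> prob_simplex \<Longrightarrow> \<exists>\<mu>. greedy_choice r p \<mu>"
  shows "\<exists>\<sigma>. is_greedy m l r p1 \<sigma>"
proof -
  define \<sigma> where "\<sigma> h = (SOME \<mu>. greedy_choice r (belief m l p1 h) \<mu>)" for h
  have "greedy_choice r (belief m l p1 h) (\<sigma> h)" if "set h \<subseteq> prob_simplex" for h
    unfolding \<sigma>_def by (rule someI_ex) (intro assms(5) belief_in_prob_simplex assms(1-4) that)
  then show ?thesis
    unfolding is_greedy_def by blast
qed

lemma irreducible_chain_trans_prob:
  assumes "\<And>w. 0 < m $ w" "0 \<le> l" "l < 1"
  shows "irreducible_chain (trans_prob m l)"
proof -
  have "0 < trans_prob m l w w'" for w w'
    using assms(1)[of w'] assms(2,3) by (auto simp: trans_prob_def intro: add_pos_nonneg)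
  then show ?thesis
    by (auto simp: irreducible_chain_def)
qed

lemma trunc_payoff_le_1:
  assumes "is_strategy m l p1 \<sigma>" "set h \<subseteq> prob_simplex" "0 \<le> d" "d \<le> 1"
  shows "trunc_payoff r d N \<sigma> h \<le> 1"
  using assms(2)
proof (induction N arbitrary: h)
  case 0
  then show ?case by simp
next
  case (Suc N)
  have \<mu>: "\<sigma> h \<in> splittings (belief m l p1 h)"
    using assms(1) Suc.prems by (simp add: is_strategy_def)
  then interpret prob_space "\<sigma> h"
    by (simp add: splittings_def)
  have "ennreal (1 - d) * indicator (Iset r) q + ennreal d * trunc_payoff r d N \<sigma> (h @ [q])
      \<le> ennreal (1 - d) * 1 + ennreal d * 1" if "q \<in> prob_simplex" for q
    using Suc.IH[of "h @ [q]"] Suc.prems that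
    by (intro add_mono mult_left_mono) (auto simp: indicator_def)
  also have "ennreal (1 - d) * 1 + ennreal d * 1 = 1"
    using assms(3,4) by (simp flip: ennreal_plus)
  finally have stage_le_1: "q \<in> prob_simplex \<Longrightarrow>
      ennreal (1 - d) * indicator (Iset r) q + ennreal d * trunc_payoff r d N \<sigma> (h @ [q]) \<le> 1" for q .
  have "AE q in \<sigma> h. q \<in> prob_simplex"
    using \<mu> by (simp add: splittings_def)
  then have "trunc_payoff r d (Suc N) \<sigma> h \<le> (\<integral>\<^sup>+ q. 1 \<partial>\<sigma> h)"
    unfolding trunc_payoff.simps by (rule nn_integral_mono_AE[OF eventually_mono]) (rule stage_le_1)
  also have "\<dots> = 1"
    by (simp add: emeasure_space_1)
  finally show ?case .
qed

lemma trunc_payoff_le_value_fn: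
  assumes "is_strategy m l p1 \<sigma>"
  shows "trunc_payoff r d N \<sigma> [] \<le> value_fn m l r d p1"
proof -
  have "trunc_payoff r d N \<sigma> [] \<le> strat_payoff r d \<sigma>"
    unfolding strat_payoff_def by (rule SUP_upper) simp
  also have "\<dots> \<le> value_fn m l r d p1"
    unfolding value_fn_def using assms by (intro SUP_upper) simp
  finally show ?thesis .
qed

lemma trunc_payoff_Suc_two_point:
  assumes "\<sigma> h = two_point a x y" "0 \<le> a" "a \<le> 1"
  shows "trunc_payoff r d (Suc N) \<sigma> h
    = ennreal a * (ennreal (1 - d) * indicator (Iset r) x + ennreal d * trunc_payoff r d N \<sigma> (h @ [x]))
      + ennreal (1 - a) * (ennreal (1 - d) * indicator (Iset r) y + ennreal d * trunc_payoff r d N \<sigma> (h @ [y]))"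
  using assms by (simp add: nn_integral_two_point)

lemma trunc_payoff_Suc_split_le:
  assumes strategy: "is_strategy m l p1 \<sigma>" and h: "set h \<subseteq> prob_simplex" and d: "0 \<le> d" "d \<le> 1"
    and \<sigma>h: "\<sigma> h = two_point a qI qJ" and a: "0 \<le> a" "a \<le> 1"
    and qI: "qI \<in> prob_simplex" and qJ: "qJ \<notin> Iset r"
    and tail: "trunc_payoff r d N \<sigma> (h @ [qJ]) \<le> c"
  shows "trunc_payoff r d (Suc N) \<sigma> h \<le> ennreal a + ennreal ((1 - a) * d) * c"
proof -
  have "trunc_payoff r d (Suc N) \<sigma> h
      = ennreal a * (ennreal (1 - d) * indicator (Iset r) qI + ennreal d * trunc_payoff r d N \<sigma> (h @ [qI]))
        + ennreal (1 - a) * (ennreal d * trunc_payoff r d N \<sigma> (h @ [qJ]))"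
    using trunc_payoff_Suc_two_point[where \<sigma>=\<sigma> and h=h, OF \<sigma>h a] qJ by simp
  also have "\<dots> \<le> ennreal a * (ennreal (1 - d) * 1 + ennreal d * 1) + ennreal (1 - a) * (ennreal d * c)"
    using trunc_payoff_le_1[OF strategy _ d, of "h @ [qI]"] h qI tail
    by (intro add_mono mult_left_mono) (auto simp: indicator_def)
  also have "\<dots> = ennreal a + ennreal ((1 - a) * d) * c"
    using a d by (simp add: ennreal_mult mult.assoc flip: ennreal_plus)
  finally show ?thesis .
qed

section \<open>The counterexample\<close>

definition cex_m :: "real^3" where "cex_m = vector [1/100000, 99899/100000, 1/1000]"
definition cex_lambda :: real where "cex_lambda = 3/5"
definition cex_r :: "real^3" where "cex_r = vector [1, -1/1000, -1000]"
definition cex_delta :: real where "cex_delta = 3/20"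
definition cex_p1 :: "real^3" where "cex_p1 = vector [1/10, 0, 9/10]"

lemma prob_simplex_3:
  "(p::real^3) \<in> prob_simplex \<longleftrightarrow> 0 \<le> p $ 1 \<and> 0 \<le> p $ 2 \<and> 0 \<le> p $ 3 \<and> p $ 1 + p $ 2 + p $ 3 = 1"
  by (auto simp: prob_simplex_def forall_3 sum_3)

lemma pair_cex_r: "pair p cex_r = p $ 1 - p $ 2 / 1000 - 1000 * p $ 3"
  by (simp add: pair_def sum_3 cex_r_def)

lemma cex_parameters:
  "cex_m \<in> prob_simplex" "cex_p1 \<in> prob_simplex" "0 \<le> cex_lambda" "cex_lambda \<le> 1"
  "0 \<le> cex_delta" "cex_delta \<le> 1"
  by (simp_all add: prob_simplex_3 cex_m_def cex_p1_def cex_lambda_def cex_delta_def)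

definition cex_alt_q1 :: "real^3" where "cex_alt_q1 = vector [1/1000, 0, 999/1000]"
definition cex_alt_q2 :: "real^3" where "cex_alt_q2 = vector [151/100050, 99899/100050, 0]"

lemma phi_cex:
  "phi cex_m cex_lambda (vector [1, 0, 0]) = vector [150001/250000, 99899/250000, 1/2500]"
  "phi cex_m cex_lambda (vector [0, 0, 1]) = vector [1/250000, 99899/250000, 1501/2500]"
  "phi cex_m cex_lambda cex_alt_q1 = vector [151/250000, 99899/250000, 2999/5000]"
  by (simp_all add: vec_eq_iff forall_3 phi_nth_prob_simplex prob_simplex_3 cex_alt_q1_def cex_m_def cex_lambda_def)

definition cex_greedy_weight :: "real^3 \<Rightarrow> real" where
  "cex_greedy_weight p = min (1001 * p $ 1) (1001/1000 * p $ 1 + 999999/1000000 * p $ 2)"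

lemma feasible_split_cex_weight_le:
  assumes "feasible_split cex_r p aI qI aJ qJ"
  shows "aI \<le> cex_greedy_weight p"
proof -
  note part = feasible_split_part[OF assms]
  show ?thesis
    using part(1,2)[of 1] part(1,2)[of 2] part(1,2)[of 3] part(3,4)
    by (simp add: cex_greedy_weight_def sum_3 pair_cex_r)
qed

lemma cex_greedy_weight_feasible:
  assumes "p \<in> Jset cex_r"
  shows "\<exists>qI qJ. feasible_split cex_r p (cex_greedy_weight p) qI (1 - cex_greedy_weight p) qJ"
proof -
  \<comment> \<open>All of state 1, as much of state 2 as it pays for, then as much of state 3 as the surplus pays for.\<close>
  define x where "x = (if p $ 1 \<le> p $ 2 / 1000 then vector [p $ 1, 1000 * p $ 1, 0]
    else vector [p $ 1, p $ 2, (p $ 1 - p $ 2 / 1000) / 1000] :: real^3)"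
  have p: "0 \<le> p $ 1" "0 \<le> p $ 2" "0 \<le> p $ 3" "p $ 1 + p $ 2 + p $ 3 = 1"
    "p $ 1 - p $ 2 / 1000 - 1000 * p $ 3 < 0"
    using assms by (auto simp: Jset_def Iset_def prob_simplex_3 pair_cex_r)
  have "0 \<le> x $ i" "x $ i \<le> p $ i" for i
    using p exhaust_3[of i] by (auto simp: x_def field_simps)
  moreover have "0 \<le> pair x cex_r" "(\<Sum>i\<in>UNIV. x $ i) = cex_greedy_weight p"
    using p by (auto simp: x_def pair_cex_r sum_3 cex_greedy_weight_def min_def field_simps)
  moreover have "cex_greedy_weight p < 1"
    using p by (auto simp: cex_greedy_weight_def min_def)
  moreover have "vector [1, 0, 0] \<in> Iset cex_r"
    by (simp add: Iset_def prob_simplex_3 pair_cex_r)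
  ultimately show ?thesis
    using feasible_split_of_part[OF _ _ _ _ _ \<open>vector [1, 0, 0] \<in> Iset cex_r\<close>, of p x] assms
    by (simp add: Jset_def)
qed

lemma cex_greedy_exists: "\<exists>\<sigma>. is_greedy cex_m cex_lambda cex_r cex_p1 \<sigma>"
proof (rule is_greedy_exists[OF cex_parameters(1,3,4,2)])
  fix p :: "real^3"
  assume "p \<in> prob_simplex"
  then show "\<exists>\<mu>. greedy_choice cex_r p \<mu>"
    by (rule greedy_choice_exists) (use cex_greedy_weight_feasible feasible_split_cex_weight_le in blast)
qed

lemma cex_greedy_is_strategy:
  "is_greedy cex_m cex_lambda cex_r cex_p1 \<sigma> \<Longrightarrow> is_strategy cex_m cex_lambda cex_p1 \<sigma>"
  using is_greedy_imp_is_strategy cex_parameters by blast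

lemma cex_greedy_Jset_le:
  assumes greedy: "is_greedy cex_m cex_lambda cex_r cex_p1 \<sigma>" and h: "set h \<subseteq> prob_simplex"
    and J: "belief cex_m cex_lambda cex_p1 h \<in> Jset cex_r"
  shows "trunc_payoff cex_r cex_delta (Suc N) \<sigma> h
    \<le> ennreal (1001 * belief cex_m cex_lambda cex_p1 h $ 1 + cex_delta)"
proof -
  let ?p = "belief cex_m cex_lambda cex_p1 h"
  obtain aI qI qJ where split: "feasible_split cex_r ?p aI qI (1 - aI) qJ"
    and \<sigma>h: "\<sigma> h = two_point aI qI qJ"
    using greedy_choice_JsetE[OF _ J] greedy h unfolding is_greedy_def by metis
  have aI: "0 \<le> aI" "aI \<le> 1" "aI \<le> 1001 * ?p $ 1"
    using split feasible_split_cex_weight_le[OF split]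
    by (auto simp: feasible_split_def cex_greedy_weight_def)
  have "qI \<in> prob_simplex" "qJ \<in> prob_simplex" "qJ \<notin> Iset cex_r"
    using split feasible_split_Jset[OF split J] by (auto simp: feasible_split_def Iset_def Jset_def)
  then have "trunc_payoff cex_r cex_delta (Suc N) \<sigma> h \<le> ennreal aI + ennreal ((1 - aI) * cex_delta) * 1"
    using cex_greedy_is_strategy[OF greedy] h cex_parameters(5,6) aI(1,2)
    by (intro trunc_payoff_Suc_split_le[where \<sigma>=\<sigma> and h=h, OF _ _ _ _ \<sigma>h] trunc_payoff_le_1) auto
  also have "\<dots> \<le> ennreal (1001 * ?p $ 1 + cex_delta)"
  proof -
    have "(1 - aI) * cex_delta \<le> cex_delta"
      using aI cex_parameters(5) by (intro mult_left_le_one_le) auto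
    then show ?thesis
      using aI cex_parameters(5) by (simp flip: ennreal_plus)
  qed
  finally show ?thesis .
qed

lemma cex_greedy_first_split:
  assumes greedy: "is_greedy cex_m cex_lambda cex_r cex_p1 \<sigma>"
  obtains qI where "qI \<in> prob_simplex" "\<sigma> [] = two_point (1001/10000) qI (vector [0, 0, 1])"
proof -
  have p1: "cex_p1 \<in> Jset cex_r" "belief cex_m cex_lambda cex_p1 [] = cex_p1"
    by (simp_all add: Jset_def Iset_def prob_simplex_3 pair_cex_r cex_p1_def belief_def)
  obtain aI qI qJ where split: "feasible_split cex_r cex_p1 aI qI (1 - aI) qJ"
    and max: "\<And>aI' qI' aJ' qJ'. feasible_split cex_r cex_p1 aI' qI' aJ' qJ' \<Longrightarrow> aI' \<le> aI"
    and \<sigma>0: "\<sigma> [] = two_point aI qI qJ"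
    using greedy_choice_JsetE[OF _ p1(1)] greedy p1(2) unfolding is_greedy_def
    by (metis empty_subsetI list.set(1))
  have aI: "aI = 1001/10000"
    using max cex_greedy_weight_feasible[OF p1(1)] feasible_split_cex_weight_le[OF split]
    by (fastforce simp: cex_greedy_weight_def cex_p1_def)
  have qJ: "qJ \<in> prob_simplex" "qI \<in> prob_simplex" "cex_p1 = aI *\<^sub>R qI + (1 - aI) *\<^sub>R qJ"
    using split by (auto simp: feasible_split_def Iset_def)
  note part = feasible_split_part[OF split]
  \<comment> \<open>The \<open>I\<close>-part of a split of weight \<open>1001/10000\<close> uses up all of state 1, so the remainder lives on state 3.\<close>
  have "(1 - aI) * qJ $ 1 = 0" "(1 - aI) * qJ $ 2 = 0"
    using part(1,2)[of 1] part(1,2)[of 2] part(1,2)[of 3] part(3,4) qJ(3) aI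
    by (auto simp: sum_3 pair_cex_r cex_p1_def vec_eq_iff forall_3)
  then have "qJ = vector [0, 0, 1]"
    using aI qJ(1) by (simp add: prob_simplex_3 vec_eq_iff forall_3)
  then show ?thesis
    using that qJ(2) \<sigma>0 aI by simp
qed

lemma cex_greedy_payoff_le:
  assumes greedy: "is_greedy cex_m cex_lambda cex_r cex_p1 \<sigma>"
  shows "strat_payoff cex_r cex_delta \<sigma> \<le> ennreal (1/8)"
proof -
  obtain qI where qI: "qI \<in> prob_simplex" and \<sigma>0: "\<sigma> [] = two_point (1001/10000) qI (vector [0, 0, 1])"
    using cex_greedy_first_split[OF greedy] .
  let ?e3 = "vector [0, 0, 1] :: real^3"
  have e3: "?e3 \<in> prob_simplex" "?e3 \<notin> Iset cex_r"
    by (simp_all add: Iset_def prob_simplex_3 pair_cex_r)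
  have belief_e3: "belief cex_m cex_lambda cex_p1 [?e3] \<in> Jset cex_r"
    "belief cex_m cex_lambda cex_p1 [?e3] $ 1 = 1/250000"
    by (simp_all add: belief_def phi_cex Jset_def Iset_def pair_cex_r prob_simplex_3)
  have tail: "trunc_payoff cex_r cex_delta N \<sigma> [?e3] \<le> ennreal (1001/250000 + 3/20)" for N
  proof (cases N)
    case (Suc N')
    then show ?thesis
      using cex_greedy_Jset_le[OF greedy _ belief_e3(1), of N'] e3(1) belief_e3(2)
      by (simp add: cex_delta_def)
  qed simp
  have "trunc_payoff cex_r cex_delta N \<sigma> [] \<le> ennreal (1/8)" for N
  proof (cases N)
    case (Suc N')
    have "trunc_payoff cex_r cex_delta (Suc N') \<sigma> []
        \<le> ennreal (1001/10000) + ennreal ((1 - 1001/10000) * cex_delta) * ennreal (1001/250000 + 3/20)"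
      using cex_greedy_is_strategy[OF greedy] cex_parameters(5,6) qI e3(2) tail
      by (intro trunc_payoff_Suc_split_le[where \<sigma>=\<sigma> and h="[]", OF _ _ _ _ \<sigma>0]) auto
    also have "\<dots> \<le> ennreal (1/8)"
      by (simp add: cex_delta_def flip: ennreal_mult ennreal_plus)
    finally show ?thesis
      using Suc by simp
  qed simp
  then show ?thesis
    unfolding strat_payoff_def by (rule SUP_least)
qed

definition cex_alt :: "(real^3) list \<Rightarrow> (real^3) measure" where
  "cex_alt h =
    (if h = [] then two_point (11/111) (vector [1, 0, 0]) cex_alt_q1
     else if h = [cex_alt_q1] then two_point (2001/5000) cex_alt_q2 (vector [0, 0, 1])
     else return borel (belief cex_m cex_lambda cex_p1 h))"

lemma cex_alt_is_strategy: "is_strategy cex_m cex_lambda cex_p1 cex_alt"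
  unfolding is_strategy_def
proof (intro allI impI)
  fix h :: "(real^3) list"
  assume h: "set h \<subseteq> prob_simplex"
  have "two_point (11/111) (vector [1, 0, 0]) cex_alt_q1 \<in> splittings cex_p1"
    by (rule two_point_in_splittings)
      (simp_all add: prob_simplex_3 cex_alt_q1_def cex_p1_def vec_eq_iff forall_3)
  moreover have "two_point (2001/5000) cex_alt_q2 (vector [0, 0, 1]) \<in> splittings (phi cex_m cex_lambda cex_alt_q1)"
    by (rule two_point_in_splittings)
      (simp_all add: prob_simplex_3 cex_alt_q2_def phi_cex vec_eq_iff forall_3)
  moreover have "return borel (belief cex_m cex_lambda cex_p1 h) \<in> splittings (belief cex_m cex_lambda cex_p1 h)"
    unfolding return_eq_two_point
    by (rule two_point_in_splittings) (simp_all add: belief_in_prob_simplex[OF cex_parameters(1,3,4,2) h])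
  ultimately show "cex_alt h \<in> splittings (belief cex_m cex_lambda cex_p1 h)"
    by (auto simp: cex_alt_def belief_def)
qed

lemma cex_alt_trunc_payoff_ge: "ennreal (7/50) \<le> trunc_payoff cex_r cex_delta 2 cex_alt []"
proof -
  let ?d = cex_delta
  have I: "vector [1, 0, 0] \<in> Iset cex_r" "cex_alt_q1 \<notin> Iset cex_r" "cex_alt_q2 \<in> Iset cex_r"
    "vector [0, 0, 1] \<notin> Iset cex_r" "phi cex_m cex_lambda (vector [1, 0, 0]) \<in> Iset cex_r"
    by (simp_all add: Iset_def prob_simplex_3 pair_cex_r cex_alt_q1_def cex_alt_q2_def phi_cex)
  have "vector [1, 0, 0] \<noteq> cex_alt_q1"
    by (simp add: cex_alt_q1_def vec_eq_iff forall_3)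
  then have alt_e1: "cex_alt [vector [1, 0, 0]]
      = two_point 1 (phi cex_m cex_lambda (vector [1, 0, 0])) (phi cex_m cex_lambda (vector [1, 0, 0]))"
    by (simp add: cex_alt_def belief_def return_eq_two_point)
  have alt_q1: "cex_alt [cex_alt_q1] = two_point (2001/5000) cex_alt_q2 (vector [0, 0, 1])"
    by (simp add: cex_alt_def)
  have alt_Nil: "cex_alt [] = two_point (11/111) (vector [1, 0, 0]) cex_alt_q1"
    by (simp add: cex_alt_def)
  have T_e1: "trunc_payoff cex_r ?d 1 cex_alt [vector [1, 0, 0]] = ennreal (1 - ?d)"
    using trunc_payoff_Suc_two_point[where \<sigma>=cex_alt and h="[vector [1, 0, 0]]" and N=0, OF alt_e1] I(5) by simp
  have T_q1: "trunc_payoff cex_r ?d 1 cex_alt [cex_alt_q1] = ennreal (2001/5000) * ennreal (1 - ?d)"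
    using trunc_payoff_Suc_two_point[where \<sigma>=cex_alt and h="[cex_alt_q1]" and N=0, OF alt_q1] I(3,4) by simp
  have "trunc_payoff cex_r ?d 2 cex_alt []
      = ennreal (11/111) * (ennreal (1 - ?d) + ennreal ?d * ennreal (1 - ?d))
        + ennreal (100/111) * (ennreal ?d * (ennreal (2001/5000) * ennreal (1 - ?d)))"
    using trunc_payoff_Suc_two_point[where \<sigma>=cex_alt and h="[]" and N=1, OF alt_Nil] I(1,2) T_e1 T_q1
    by (simp add: numeral_2_eq_2)
  also have "\<dots> \<ge> ennreal (7/50)"
    by (simp add: cex_delta_def flip: ennreal_mult ennreal_plus)
  finally show ?thesis .
qed

theorem proposition1:
  shows "\<exists>(m::real^3) (l::real) (r::real^3) (d::real) (p1::real^3).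
     m \<in> prob_simplex \<and> 0 \<le> l \<and> l < 1 \<and> irreducible_chain (trans_prob m l)
     \<and> 0 < d \<and> d < 1 \<and> p1 \<in> prob_simplex
     \<and> (\<exists>\<sigma>. is_greedy m l r p1 \<sigma>)
     \<and> (\<forall>\<sigma>. is_greedy m l r p1 \<sigma> \<longrightarrow> \<not> optimal m l r d p1 \<sigma>)"
proof -
  have "irreducible_chain (trans_prob cex_m cex_lambda)"
  proof (rule irreducible_chain_trans_prob)
    show "0 < cex_m $ w" for w :: 3
      using exhaust_3[of w] by (auto simp: cex_m_def)
  qed (simp_all add: cex_lambda_def)
  moreover have "\<not> optimal cex_m cex_lambda cex_r cex_delta cex_p1 \<sigma>"
    if greedy: "is_greedy cex_m cex_lambda cex_r cex_p1 \<sigma>" for \<sigma>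
  proof
    assume "optimal cex_m cex_lambda cex_r cex_delta cex_p1 \<sigma>"
    have "ennreal (7/50) \<le> trunc_payoff cex_r cex_delta 2 cex_alt []"
      by (rule cex_alt_trunc_payoff_ge)
    also have "\<dots> \<le> value_fn cex_m cex_lambda cex_r cex_delta cex_p1"
      by (rule trunc_payoff_le_value_fn[OF cex_alt_is_strategy])
    also have "\<dots> = strat_payoff cex_r cex_delta \<sigma>"
      using \<open>optimal cex_m cex_lambda cex_r cex_delta cex_p1 \<sigma>\<close> by (simp add: optimal_def)
    also have "\<dots> \<le> ennreal (1/8)"
      by (rule cex_greedy_payoff_le[OF greedy])
    finally show False
      by simp
  qed
  ultimately show ?thesis
    using cex_parameters(1,2) cex_greedy_exists
    by (intro exI[of _ cex_m] exI[of _ cex_lambda] exI[of _ cex_r] exI[of _ cex_delta] exI[of _ cex_p1])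
      (simp add: cex_lambda_def cex_delta_def)
qed

end
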